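(* Let $\alpha>0$. Then $R(\alpha,u)\in L^1(\mathbb{R}^N)$ for every $u\in W^{s,p}(\mathbb{R}^N)$.
   Context: $s\in(0,1)$, $p>2$, $N=sp$; $W^{s,p}(\mathbb{R}^N)$ is the fractional Sobolev space. $k_p=\min\{k\in\mathbb{N}:k\ge p\}$ and $R(\alpha,t)=\exp(\alpha|t|^{N/(N-s)})-\sum_{k=0}^{k_p-2}\frac{\alpha^k}{k!}|t|^{\frac{N}{N-s}k}$; $R(\alpha,u)$ denotes the function $x\mapsto R(\alpha,u(x))$. *)

theory Defs
  imports "HOL-Analysis.Analysis"
begin

definition kp :: "real \<Rightarrow> nat" where
  "kp p = nat \<lceil>p\<rceil>"

definition Rfun :: "nat \<Rightarrow> real \<Rightarrow> real \<Rightarrow> real \<Rightarrow> real \<Rightarrow> real" where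
  "Rfun N s p \<alpha> t =
     exp (\<alpha> * \<bar>t\<bar> powr (real N / (real N - s)))
     - (\<Sum>k\<in>{0..kp p - 2}. \<alpha> ^ k / fact k * (\<bar>t\<bar> powr (real N / (real N - s))) ^ k)"

text \<open>Fractional Sobolev space W^{s,p}(R^N), with R^N modelled by a euclidean space of
  dimension N = DIM('a): u in L^p and finite Gagliardo seminorm.\<close>
definition frac_sobolev :: "real \<Rightarrow> real \<Rightarrow> ('a::euclidean_space \<Rightarrow> real) set" where
  "frac_sobolev s p = {u. u \<in> borel_measurable lborel
      \<and> integrable lborel (\<lambda>x. \<bar>u x\<bar> powr p)
      \<and> integrable (lborel \<Otimes>\<^sub>M lborel)
          (\<lambda>(x,y). \<bar>u x - u y\<bar> powr p / norm (x - y) powr (real DIM('a) + s * p))}"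

end

theory Submission
  imports Defs
begin

(* Let E denote the critical Gagliardo energy (kernel |x - y|^(-2N)), which is dilation
   invariant. If f jumps by at least h from a set A into the complement of a set S of finite
   measure, comparing each point of A with a ball of measure 2|S| around it gives
   c_N h^p |A| <= |S| E(f), with c_N independent of S. Cutting (|u| - t)^+ into n layers of
   thickness n^(-1/p), applying this to each layer, and combining the superadditivity of r^p
   with AM-GM yields |{|u| >= t + n^(1-1/p)}| <= |{|u| >= t}| (E_t / c_N)^n, where E_t is the
   energy of (|u| - t)^+. Since E_t -> 0, for large t this geometric decay beats the growth
   exp(alpha 2^q n) of exp(alpha |u|^q) on these level sets, q = p/(p-1) = N/(N-s). Below the
   level t, R(alpha, u) <= C |u|^p because R vanishes to order q (k_p - 1) >= p at 0, and
   |u|^p is integrable. *)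

lemma powr_add_le_powr_add:
  fixes x y p :: real
  assumes "x \<ge> 0" "y \<ge> 0" "p \<ge> 1"
  shows "x powr p + y powr p \<le> (x + y) powr p"
proof (cases "x + y = 0")
  case True
  then have "x = 0" "y = 0" using assms by auto
  then show ?thesis using assms by simp
next
  case False
  have "x powr p = x * x powr (p - 1)" "y powr p = y * y powr (p - 1)"
    using assms by (auto simp: powr_diff)
  moreover have "x * x powr (p - 1) \<le> x * (x + y) powr (p - 1)"
    and "y * y powr (p - 1) \<le> y * (x + y) powr (p - 1)"
    using assms by (auto intro!: mult_left_mono powr_mono2)
  moreover have "(x + y) powr p = (x + y) * (x + y) powr (p - 1)"
    using False assms by (simp add: powr_diff)
  ultimately show ?thesis by (simp add: distrib_right)
qed

lemma sum_powr_le_powr_sum: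
  fixes f :: "nat \<Rightarrow> real"
  assumes "\<And>k. f k \<ge> 0" "p \<ge> 1"
  shows "(\<Sum>k<n. f k powr p) \<le> (\<Sum>k<n. f k) powr p"
proof (induction n)
  case (Suc n)
  then have "(\<Sum>k<Suc n. f k powr p) \<le> (\<Sum>k<n. f k) powr p + f n powr p" by simp
  also have "\<dots> \<le> (\<Sum>k<Suc n. f k) powr p"
    using assms by (simp add: powr_add_le_powr_add sum_nonneg)
  finally show ?case .
qed simp

lemma powr_add_le_two_powr:
  fixes a b q :: real
  assumes "a \<ge> 0" "b \<ge> 0" "q > 0"
  shows "(a + b) powr q \<le> 2 powr q * (a powr q + b powr q)"
proof -
  have "(a + b) powr q \<le> (2 * max a b) powr q" using assms by (intro powr_mono2) auto
  also have "\<dots> = 2 powr q * max a b powr q" using assms by (simp add: powr_mult)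
  also have "max a b powr q \<le> a powr q + b powr q" using assms by (simp add: max_def)
  finally show ?thesis by simp
qed

lemma prod_le_mean_power:
  fixes e :: "nat \<Rightarrow> real"
  assumes "\<And>k. e k \<ge> 0" "n \<ge> 1"
  shows "(\<Prod>k<n. e k) \<le> ((\<Sum>k<n. e k) / real n) ^ n"
proof (cases "(\<Prod>k<n. e k) = 0")
  case True
  show ?thesis unfolding True using assms by (simp add: sum_nonneg)
next
  case False
  have "(\<Prod>k<n. e k) powr (1 / real n) \<le> (\<Sum>k<n. e k / real n)"
    using arith_geom_mean[of "{..<n}" e] assms by (simp add: lessThan_empty_iff)
  then have "(\<Prod>k<n. e k) powr (1 / real n) \<le> (\<Sum>k<n. e k) / real n"
    by (simp add: sum_divide_distrib)
  then have "((\<Prod>k<n. e k) powr (1 / real n)) ^ n \<le> ((\<Sum>k<n. e k) / real n) ^ n"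
    by (intro power_mono) auto
  also have "((\<Prod>k<n. e k) powr (1 / real n)) ^ n = (\<Prod>k<n. e k)"
    using False assms by (simp add: powr_power prod_nonneg)
  finally show ?thesis .
qed

section \<open>Layers\<close>

definition layer :: "real \<Rightarrow> real \<Rightarrow> real \<Rightarrow> real" where
  "layer t h r = min (max (r - t) 0) h"

definition excess :: "real \<Rightarrow> real \<Rightarrow> real" where
  "excess t r = max (r - t) 0"

lemma layer_mono: "b \<le> a \<Longrightarrow> layer t h b \<le> layer t h a"
  by (simp add: layer_def min_def max_def)

lemma sum_layers:
  assumes "h \<ge> 0"
  shows "(\<Sum>k<n. layer (t + real k * h) h r) = min (excess t r) (real n * h)"
proof (induction n)
  case (Suc n)
  have "min (excess t r) m + layer (t + m) h r = min (excess t r) (m + h)" if "m \<ge> 0" for m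
    using assms that by (auto simp: layer_def excess_def min_def max_def)
  from this[of "real n * h"] show ?case
    using Suc assms by (simp add: algebra_simps)
qed (simp add: excess_def)

lemma excess_diff_le: "\<bar>excess t a - excess t b\<bar> \<le> \<bar>a - b\<bar>"
  by (simp add: excess_def max_def)

lemma sum_layer_diff_powr_le:
  assumes "h > 0" "p \<ge> 1"
  shows "(\<Sum>k<n. \<bar>layer (t + real k * h) h a - layer (t + real k * h) h b\<bar> powr p)
    \<le> \<bar>excess t a - excess t b\<bar> powr p"
proof -
  have ordered: "(\<Sum>k<n. \<bar>layer (t + real k * h) h a - layer (t + real k * h) h b\<bar> powr p)
    \<le> \<bar>excess t a - excess t b\<bar> powr p" if "b \<le> a" for a b
  proof -
    have "(\<Sum>k<n. \<bar>layer (t + real k * h) h a - layer (t + real k * h) h b\<bar> powr p)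
        \<le> (\<Sum>k<n. \<bar>layer (t + real k * h) h a - layer (t + real k * h) h b\<bar>) powr p"
      using assms by (intro sum_powr_le_powr_sum) auto
    also have "(\<Sum>k<n. \<bar>layer (t + real k * h) h a - layer (t + real k * h) h b\<bar>)
        = min (excess t a) (real n * h) - min (excess t b) (real n * h)"
      using layer_mono[OF that] assms by (simp add: sum_subtractf sum_layers)
    also have "(\<dots>) powr p \<le> \<bar>excess t a - excess t b\<bar> powr p"
      using assms that by (intro powr_mono2) (auto simp: excess_def min_def max_def)
    finally show ?thesis .
  qed
  show ?thesis
    using ordered[of b a] ordered[of a b] by (cases "b \<le> a") (auto simp: abs_minus_commute)
qed

section \<open>The critical Gagliardo energy\<close>

text \<open>The Gagliardo energy \<open>[f]\<^sub>s\<^sub>,\<^sub>p\<^sup>p\<close> in the critical case \<open>s p = N\<close>: the kernel exponent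
  \<open>N + s p\<close> is \<open>2 N\<close>, which makes the energy invariant under dilations.\<close>
definition gagliardo_kernel :: "real \<Rightarrow> ('a::euclidean_space \<Rightarrow> real) \<Rightarrow> 'a \<times> 'a \<Rightarrow> ennreal" where
  "gagliardo_kernel p f = (\<lambda>(x, y). ennreal (\<bar>f x - f y\<bar> powr p / norm (x - y) powr (2 * real DIM('a))))"

definition gagliardo_energy :: "real \<Rightarrow> ('a::euclidean_space \<Rightarrow> real) \<Rightarrow> ennreal" where
  "gagliardo_energy p f = integral\<^sup>N (lborel \<Otimes>\<^sub>M lborel) (gagliardo_kernel p f)"

lemma gagliardo_kernel_apply:
  fixes f :: "'a::euclidean_space \<Rightarrow> real"
  shows "gagliardo_kernel p f (x, y) = ennreal (\<bar>f x - f y\<bar> powr p / norm (x - y) powr (2 * real DIM('a)))"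
  by (simp add: gagliardo_kernel_def)

lemma measurable_gagliardo_kernel [measurable]:
  fixes f :: "'a::euclidean_space \<Rightarrow> real"
  assumes [measurable]: "f \<in> borel_measurable lborel"
  shows "gagliardo_kernel p f \<in> borel_measurable (lborel \<Otimes>\<^sub>M lborel)"
  unfolding gagliardo_kernel_def by measurable

definition capacity_const :: "nat \<Rightarrow> real" where
  "capacity_const N = unit_ball_vol (real N) ^ 2 / 4"

lemma capacity_const_pos: "capacity_const N > 0"
proof -
  have "unit_ball_vol (real N) \<noteq> 0" using unit_ball_vol_pos[of "real N"] by linarith
  then show ?thesis unfolding capacity_const_def by simp
qed

lemma emeasure_ball_diff_ge:
  fixes S :: "'a::euclidean_space set"
  assumes "S \<in> sets lborel" "emeasure lborel S = ennreal \<sigma>" "\<sigma> \<ge> 0" "R \<ge> 0"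
    and "unit_ball_vol DIM('a) * R ^ DIM('a) = 2 * \<sigma>"
  shows "ennreal \<sigma> \<le> emeasure lborel (ball x R - S)"
proof -
  have "ennreal \<sigma> + ennreal \<sigma> = emeasure lborel (ball x R)"
    using assms by (simp add: emeasure_ball ennreal_plus[symmetric] del: ennreal_plus)
  also have "\<dots> \<le> emeasure lborel ((ball x R - S) \<union> S)"
    using assms by (intro emeasure_mono) auto
  also have "\<dots> \<le> emeasure lborel (ball x R - S) + ennreal \<sigma>"
    using assms by (intro order_trans[OF emeasure_subadditive]) auto
  finally show ?thesis by (simp add: ennreal_add_left_cancel_le add.commute)
qed

lemma nn_integral_gagliardo_kernel_ge:
  fixes f :: "'a::euclidean_space \<Rightarrow> real"
  assumes S: "S \<in> sets lborel" "emeasure lborel S = ennreal \<sigma>" "\<sigma> > 0" "x \<in> S"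
    and h: "h > 0" and p: "p > 0" and jump: "\<And>y. y \<notin> S \<Longrightarrow> h \<le> \<bar>f x - f y\<bar>"
  shows "ennreal (capacity_const DIM('a) * h powr p / \<sigma>) \<le> (\<integral>\<^sup>+y. gagliardo_kernel p f (x, y) \<partial>lborel)"
proof -
  define N where "N = DIM('a)"
  define \<omega> where "\<omega> = unit_ball_vol (real N)"
  have \<omega>: "\<omega> > 0" unfolding \<omega>_def by simp
  have N: "N > 0" unfolding N_def by simp
  \<comment> \<open>the ball around \<open>x\<close> of measure \<open>2 \<sigma>\<close> meets the complement of \<open>S\<close> in measure \<open>\<ge> \<sigma>\<close>\<close>
  define R where "R = (2 * \<sigma> / \<omega>) powr (1 / real N)"
  have R: "R > 0" unfolding R_def using S \<omega> by simp
  have RN: "R ^ N = 2 * \<sigma> / \<omega>"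
    unfolding R_def using S \<omega> N by (simp add: powr_power)
  have "R powr (2 * real N) = (R powr real N) ^ 2"
    using R by (simp add: powr_power)
  then have R2N: "R powr (2 * real N) = (2 * \<sigma> / \<omega>) ^ 2"
    using R RN by (simp add: powr_realpow)
  have "ennreal (capacity_const DIM('a) * h powr p / \<sigma>) = ennreal (h powr p / R powr (2 * real N)) * ennreal \<sigma>"
    unfolding capacity_const_def R2N N_def[symmetric] \<omega>_def[symmetric] using S \<omega>
    by (simp add: ennreal_mult[symmetric] power2_eq_square field_simps)
  also have "\<dots> \<le> ennreal (h powr p / R powr (2 * real N)) * emeasure lborel (ball x R - S)"
  proof (intro mult_left_mono)
    have "unit_ball_vol DIM('a) * R ^ DIM('a) = 2 * \<sigma>"
      unfolding N_def[symmetric] \<omega>_def[symmetric] using RN \<omega> by simp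
    then show "ennreal \<sigma> \<le> emeasure lborel (ball x R - S)"
      using emeasure_ball_diff_ge[OF S(1,2)] S R by simp
  qed simp
  also have "\<dots> = (\<integral>\<^sup>+y. ennreal (h powr p / R powr (2 * real N)) * indicator (ball x R - S) y \<partial>lborel)"
    using S by (simp add: nn_integral_cmult_indicator)
  also have "\<dots> \<le> (\<integral>\<^sup>+y. gagliardo_kernel p f (x, y) \<partial>lborel)"
  proof (intro nn_integral_mono)
    fix y
    show "ennreal (h powr p / R powr (2 * real N)) * indicator (ball x R - S) y \<le> gagliardo_kernel p f (x, y)"
    proof (cases "y \<in> ball x R - S")
      case True
      then have "x \<noteq> y" using S by auto
      then have "h powr p / R powr (2 * real N) \<le> \<bar>f x - f y\<bar> powr p / norm (x - y) powr (2 * real N)"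
        using True jump h p by (intro frac_le powr_mono2) (auto simp: dist_norm)
      then show ?thesis using True by (simp add: N_def gagliardo_kernel_apply)
    qed simp
  qed
  finally show ?thesis .
qed

lemma gagliardo_energy_lower_bound:
  fixes f :: "'a::euclidean_space \<Rightarrow> real"
  assumes [measurable]: "f \<in> borel_measurable lborel" "A \<in> sets lborel" "S \<in> sets lborel"
    and "emeasure lborel S < \<infinity>" "A \<subseteq> S" "h > 0" "p > 0"
    and jump: "\<And>x y. x \<in> A \<Longrightarrow> y \<notin> S \<Longrightarrow> h \<le> \<bar>f x - f y\<bar>"
  shows "ennreal (capacity_const DIM('a) * h powr p) * emeasure lborel A
    \<le> emeasure lborel S * gagliardo_energy p f"
proof -
  define \<sigma> where "\<sigma> = measure lborel S"
  have eS: "emeasure lborel S = ennreal \<sigma>"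
    using assms by (simp add: \<sigma>_def emeasure_eq_ennreal_measure)
  show ?thesis
  proof (cases "\<sigma> = 0")
    case True
    have "emeasure lborel A \<le> emeasure lborel S" using assms by (intro emeasure_mono) auto
    then show ?thesis using True eS by simp
  next
    case False
    then have \<sigma>: "\<sigma> > 0" unfolding \<sigma>_def by (simp add: less_le)
    define c where "c = capacity_const DIM('a) * h powr p / \<sigma>"
    have "ennreal c * emeasure lborel A = (\<integral>\<^sup>+x. ennreal c * indicator A x \<partial>lborel)"
      using assms by (simp add: nn_integral_cmult_indicator)
    also have "\<dots> \<le> (\<integral>\<^sup>+x. \<integral>\<^sup>+y. gagliardo_kernel p f (x, y) \<partial>lborel \<partial>lborel)"
    proof (intro nn_integral_mono)
      fix x
      have "ennreal c \<le> (\<integral>\<^sup>+y. gagliardo_kernel p f (x, y) \<partial>lborel)" if "x \<in> A"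
        unfolding c_def using assms eS \<sigma> that by (intro nn_integral_gagliardo_kernel_ge[where S=S]) auto
      then show "ennreal c * indicator A x \<le> (\<integral>\<^sup>+y. gagliardo_kernel p f (x, y) \<partial>lborel)"
        by (auto simp: indicator_def)
    qed
    also have "\<dots> = gagliardo_energy p f"
      unfolding gagliardo_energy_def by (rule lborel.nn_integral_fst) simp
    finally have "ennreal \<sigma> * (ennreal c * emeasure lborel A) \<le> ennreal \<sigma> * gagliardo_energy p f"
      by (rule mult_left_mono) simp
    then show ?thesis
      unfolding c_def eS using \<sigma> capacity_const_pos[of "DIM('a)"]
      by (simp add: mult.assoc[symmetric] ennreal_mult[symmetric] del: ennreal_mult)
  qed
qed

lemma sum_layer_energy_le:
  fixes f :: "'a::euclidean_space \<Rightarrow> real"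
  assumes [measurable]: "f \<in> borel_measurable lborel" and "h > 0" "p \<ge> 1"
  shows "(\<Sum>k<n. gagliardo_energy p (\<lambda>x. layer (t + real k * h) h (f x)))
    \<le> gagliardo_energy p (\<lambda>x. excess t (f x))"
proof -
  have "(\<Sum>k<n. gagliardo_kernel p (\<lambda>x. layer (t + real k * h) h (f x)) z)
      \<le> gagliardo_kernel p (\<lambda>x. excess t (f x)) z" for z
    using sum_layer_diff_powr_le[OF assms(2,3)]
    by (simp add: gagliardo_kernel_def case_prod_beta sum_ennreal sum_divide_distrib[symmetric]
        divide_right_mono ennreal_leI)
  then show ?thesis
    unfolding gagliardo_energy_def
    by (subst nn_integral_sum[symmetric]) (auto intro!: nn_integral_mono simp: layer_def)
qed

lemma excess_energy_tendsto_0: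
  fixes f :: "'a::euclidean_space \<Rightarrow> real"
  assumes [measurable]: "f \<in> borel_measurable lborel" and "p > 0" "gagliardo_energy p f < \<infinity>"
  shows "(\<lambda>i::nat. gagliardo_energy p (\<lambda>x. excess (real i) \<bar>f x\<bar>)) \<longlonglongrightarrow> 0"
proof -
  have bound: "gagliardo_kernel p (\<lambda>x. excess t \<bar>f x\<bar>) z \<le> gagliardo_kernel p f z" for t z
  proof -
    have "\<bar>excess t \<bar>f x\<bar> - excess t \<bar>f y\<bar>\<bar> \<le> \<bar>f x - f y\<bar>" for x y
      using excess_diff_le abs_triangle_ineq3 order_trans by blast
    then show ?thesis
      using assms unfolding gagliardo_kernel_def
      by (auto intro!: ennreal_leI divide_right_mono powr_mono2 simp: case_prod_beta)
  qed
  have vanish: "(\<lambda>i::nat. gagliardo_kernel p (\<lambda>x. excess (real i) \<bar>f x\<bar>) z) \<longlonglongrightarrow> 0" for z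
  proof (rule tendsto_eventually, rule eventually_sequentiallyI)
    fix i :: nat
    assume "nat \<lceil>max \<bar>f (fst z)\<bar> \<bar>f (snd z)\<bar>\<rceil> \<le> i"
    then have "excess (real i) \<bar>f (fst z)\<bar> = 0" "excess (real i) \<bar>f (snd z)\<bar> = 0"
      unfolding excess_def by linarith+
    then show "gagliardo_kernel p (\<lambda>x. excess (real i) \<bar>f x\<bar>) z = 0"
      by (simp add: gagliardo_kernel_def case_prod_beta)
  qed
  have "(\<lambda>i::nat. gagliardo_energy p (\<lambda>x. excess (real i) \<bar>f x\<bar>))
      \<longlonglongrightarrow> (\<integral>\<^sup>+(z :: 'a \<times> 'a). 0 \<partial>(lborel \<Otimes>\<^sub>M lborel))"
    unfolding gagliardo_energy_def using assms(3) bound vanish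
    by (intro nn_integral_dominated_convergence[where w="gagliardo_kernel p f"])
      (auto simp: gagliardo_energy_def excess_def)
  then show ?thesis by simp
qed

section \<open>Decay of the level sets\<close>

lemma emeasure_level_le_prod_layer_energy:
  fixes f :: "'a::euclidean_space \<Rightarrow> real"
  assumes [measurable]: "f \<in> borel_measurable lborel" and h: "h > 0" and p: "p > 0"
    and fin: "emeasure lborel {x. t \<le> f x} < \<infinity>"
  shows "ennreal (capacity_const DIM('a) ^ n * h powr (p * real n)) * emeasure lborel {x. t + real n * h \<le> f x}
    \<le> emeasure lborel {x. t \<le> f x} * (\<Prod>k<n. gagliardo_energy p (\<lambda>x. layer (t + real k * h) h (f x)))"
proof (induction n)
  case (Suc n)
  define c where "c = capacity_const DIM('a)"
  define E where "E = gagliardo_energy p (\<lambda>x. layer (t + real n * h) h (f x))"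
  define S where "S = {x. t + real n * h < f x}"
  have [measurable]: "S \<in> sets lborel" unfolding S_def by measurable
  have "emeasure lborel S \<le> emeasure lborel {x. t \<le> f x}"
  proof (intro emeasure_mono subsetI)
    have "t \<le> t + real n * h" using h by simp
    then show "x \<in> {x. t \<le> f x}" if "x \<in> S" for x
      using that unfolding S_def by simp
  qed simp
  then have "ennreal (c * h powr p) * emeasure lborel {x. t + real (Suc n) * h \<le> f x} \<le> emeasure lborel S * E"
    unfolding c_def E_def using fin h p
    by (intro gagliardo_energy_lower_bound)
      (auto simp: S_def layer_def algebra_simps min_def max_def)
  also have "emeasure lborel S \<le> emeasure lborel {x. t + real n * h \<le> f x}"
    unfolding S_def by (intro emeasure_mono) auto
  finally have step: "ennreal (c * h powr p) * emeasure lborel {x. t + real (Suc n) * h \<le> f x}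
      \<le> emeasure lborel {x. t + real n * h \<le> f x} * E"
    by (simp add: mult_right_mono)
  have "c ^ Suc n * h powr (p * real (Suc n)) = (c ^ n * h powr (p * real n)) * (c * h powr p)"
    using h by (simp add: powr_add[symmetric] algebra_simps)
  then have "ennreal (c ^ Suc n * h powr (p * real (Suc n)))
      = ennreal (c ^ n * h powr (p * real n)) * ennreal (c * h powr p)"
    using capacity_const_pos[of "DIM('a)"] unfolding c_def by (simp add: ennreal_mult mult_ac)
  then have "ennreal (c ^ Suc n * h powr (p * real (Suc n))) * emeasure lborel {x. t + real (Suc n) * h \<le> f x}
      \<le> (ennreal (c ^ n * h powr (p * real n)) * emeasure lborel {x. t + real n * h \<le> f x}) * E"
    using step by (simp add: mult.assoc mult_left_mono)
  also have "\<dots> \<le> (emeasure lborel {x. t \<le> f x}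
      * (\<Prod>k<n. gagliardo_energy p (\<lambda>x. layer (t + real k * h) h (f x)))) * E"
    using Suc.IH unfolding c_def by (rule mult_right_mono) simp
  finally show ?case unfolding c_def E_def by (simp add: mult.assoc)
qed simp

lemma prod_ennreal_le_mean_power:
  fixes F :: "nat \<Rightarrow> ennreal"
  assumes sum: "(\<Sum>k<n. F k) \<le> ennreal g" and g: "g \<ge> 0" and n: "n \<ge> 1"
  shows "(\<Prod>k<n. F k) \<le> ennreal ((g / real n) ^ n)"
proof -
  define e where "e k = enn2real (F k)" for k
  have e: "e k \<ge> 0" for k unfolding e_def by simp
  have Fg: "F k \<le> ennreal g" if "k < n" for k
    using that by (intro order_trans[OF member_le_sum sum]) auto
  have "F k < top" if "k < n" for k
    using Fg[OF that] ennreal_less_top[of g] by (rule le_less_trans)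
  then have F: "F k = ennreal (e k)" if "k < n" for k
    using that unfolding e_def by simp
  have "(\<Sum>k<n. F k) = (\<Sum>k<n. ennreal (e k))" by (rule sum.cong) (simp_all add: F)
  also have "\<dots> = ennreal (\<Sum>k<n. e k)" by (rule sum_ennreal) (rule e)
  finally have "(\<Sum>k<n. e k) \<le> g"
    using sum g by simp
  then have "((\<Sum>k<n. e k) / real n) ^ n \<le> (g / real n) ^ n"
    using e by (intro power_mono divide_right_mono) (auto simp: sum_nonneg)
  moreover have "(\<Prod>k<n. e k) \<le> ((\<Sum>k<n. e k) / real n) ^ n"
    using e n by (rule prod_le_mean_power)
  ultimately have "(\<Prod>k<n. e k) \<le> (g / real n) ^ n"
    by linarith
  moreover have "(\<Prod>k<n. F k) = ennreal (\<Prod>k<n. e k)"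
    by (subst prod_ennreal[symmetric]) (simp_all add: e F)
  ultimately show ?thesis by (simp add: ennreal_leI)
qed

lemma emeasure_level_decay:
  fixes f :: "'a::euclidean_space \<Rightarrow> real"
  assumes [measurable]: "f \<in> borel_measurable lborel" and p: "p > 1"
    and fin: "emeasure lborel {x. t \<le> f x} < \<infinity>"
    and energy: "gagliardo_energy p (\<lambda>x. excess t (f x)) \<le> ennreal g" and g: "g \<ge> 0"
  shows "emeasure lborel {x. t + real n powr (1 - 1/p) \<le> f x}
    \<le> emeasure lborel {x. t \<le> f x} * ennreal ((g / capacity_const DIM('a)) ^ n)"
proof (cases "n = 0")
  case False
  then have n: "n \<ge> 1" by simp
  define c where "c = capacity_const DIM('a)"
  have c: "c > 0" unfolding c_def by (rule capacity_const_pos)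
  \<comment> \<open>this \<open>h\<close> makes \<open>h\<^sup>p\<^sup>n = n\<^sup>-\<^sup>n\<close>, matching the AM-GM bound \<open>(g / n)\<^sup>n\<close>\<close>
  define h where "h = real n powr (- 1 / p)"
  have h: "h > 0" unfolding h_def using n by simp
  have nh: "real n * h = real n powr (1 - 1/p)"
    unfolding h_def using n by (simp add: powr_add[symmetric] powr_mult_base)
  have "h powr (p * real n) = real n powr (- real n)"
    unfolding h_def using p by (simp add: powr_powr)
  then have hp: "h powr (p * real n) = 1 / real n ^ n"
    using n by (simp add: powr_minus powr_realpow divide_inverse)
  define a where "a = c ^ n / real n ^ n"
  have a: "a > 0" unfolding a_def using c n by simp
  have "(\<Sum>k<n. gagliardo_energy p (\<lambda>x. layer (t + real k * h) h (f x))) \<le> ennreal g"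
    using order_trans[OF sum_layer_energy_le[OF _ h] energy] p by simp
  then have prod: "(\<Prod>k<n. gagliardo_energy p (\<lambda>x. layer (t + real k * h) h (f x)))
      \<le> ennreal ((g / real n) ^ n)"
    using g n by (rule prod_ennreal_le_mean_power)
  have "ennreal a * emeasure lborel {x. t + real n powr (1 - 1/p) \<le> f x}
      = ennreal (c ^ n * h powr (p * real n)) * emeasure lborel {x. t + real n * h \<le> f x}"
    unfolding a_def hp nh by (simp add: divide_inverse)
  also have "\<dots> \<le> emeasure lborel {x. t \<le> f x}
      * (\<Prod>k<n. gagliardo_energy p (\<lambda>x. layer (t + real k * h) h (f x)))"
    unfolding c_def using h p fin by (intro emeasure_level_le_prod_layer_energy) auto
  also have "\<dots> \<le> emeasure lborel {x. t \<le> f x} * ennreal ((g / real n) ^ n)"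
    using prod by (rule mult_left_mono) simp
  finally have main: "ennreal a * emeasure lborel {x. t + real n powr (1 - 1/p) \<le> f x}
      \<le> emeasure lborel {x. t \<le> f x} * ennreal ((g / real n) ^ n)" .
  have "emeasure lborel {x. t + real n powr (1 - 1/p) \<le> f x}
      = ennreal (1 / a) * (ennreal a * emeasure lborel {x. t + real n powr (1 - 1/p) \<le> f x})"
    using a by (simp add: mult.assoc[symmetric] ennreal_mult[symmetric] del: ennreal_mult)
  also have "\<dots> \<le> ennreal (1 / a) * (emeasure lborel {x. t \<le> f x} * ennreal ((g / real n) ^ n))"
    using main by (rule mult_left_mono) simp
  also have "\<dots> = emeasure lborel {x. t \<le> f x} * ennreal (1 / a * (g / real n) ^ n)"
    using a g by (subst ennreal_mult) (auto simp: mult_ac)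
  also have "1 / a * (g / real n) ^ n = (g / c) ^ n"
    unfolding a_def using c n by (simp add: power_divide field_simps)
  finally show ?thesis unfolding c_def .
qed simp

lemma level_index_exists:
  fixes w t q r :: real
  assumes "t \<le> w" "t \<ge> 0" "q > 0" "r > 0" "q * r = 1"
  obtains m :: nat where "t + real m powr r \<le> w" "w powr q \<le> 2 powr q * (t powr q + real m + 1)"
proof
  define d where "d = w - t"
  have d: "d \<ge> 0" "(d powr q) powr r = d" using assms unfolding d_def by (simp_all add: powr_powr)
  define m where "m = nat \<lfloor>d powr q\<rfloor>"
  have "real m = of_int \<lfloor>d powr q\<rfloor>" unfolding m_def by simp
  then have m: "real m \<le> d powr q" "d powr q < real m + 1" by linarith+
  have "real m powr r \<le> (d powr q) powr r" using m assms by (intro powr_mono2) auto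
  then show "t + real m powr r \<le> w" using d unfolding d_def by simp
  have "(d powr q) powr r < (real m + 1) powr r" using m assms by (intro powr_less_mono2) auto
  then have "w powr q \<le> (t + (real m + 1) powr r) powr q"
    using d assms unfolding d_def by (intro powr_mono2) auto
  also have "\<dots> \<le> 2 powr q * (t powr q + ((real m + 1) powr r) powr q)"
    using assms by (intro powr_add_le_two_powr) auto
  also have "((real m + 1) powr r) powr q = real m + 1"
    using assms by (simp add: powr_powr mult.commute)
  finally show "w powr q \<le> 2 powr q * (t powr q + real m + 1)" by (simp add: add.assoc)
qed

lemma integrable_exp_above_level:
  fixes f :: "'a::euclidean_space \<Rightarrow> real"
  assumes [measurable]: "f \<in> borel_measurable lborel" and p: "p > 1"
    and q: "q > 0" "q * (1 - 1/p) = 1" and \<alpha>: "\<alpha> \<ge> 0" and t: "t \<ge> 0"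
    and fin: "emeasure lborel {x. t \<le> f x} < \<infinity>"
    and energy: "gagliardo_energy p (\<lambda>x. excess t (f x)) \<le> ennreal g" and g: "g \<ge> 0"
    and small: "exp (\<alpha> * 2 powr q) * g < capacity_const DIM('a)"
  shows "integrable lborel (\<lambda>x. exp (\<alpha> * f x powr q) * indicator {x. t \<le> f x} x)"
proof -
  define r where "r = 1 - 1/p"
  have r: "r > 0" unfolding r_def using p by (simp add: field_simps)
  define c where "c = capacity_const DIM('a)"
  define \<rho> where "\<rho> = exp (\<alpha> * 2 powr q) * g / c"
  have \<rho>: "\<rho> \<ge> 0" "\<rho> < 1"
    unfolding \<rho>_def c_def using small g capacity_const_pos[of "DIM('a)"] by auto
  obtain B where B: "emeasure lborel {x. t \<le> f x} = ennreal B" "B \<ge> 0"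
    using fin by (cases "emeasure lborel {x. t \<le> f x}" rule: ennreal_cases) auto
  \<comment> \<open>on the level set \<open>I n\<close> the integrand is at most \<open>D n\<close>, and \<open>I n\<close> has measure \<open>\<le> B (g / c)\<^sup>n\<close>\<close>
  define K where "K = exp (\<alpha> * 2 powr q * (t powr q + 1))"
  define D where "D n = K * exp (\<alpha> * 2 powr q) ^ n" for n :: nat
  define I where "I n = {x. t + real n powr r \<le> f x}" for n :: nat
  have I_sets [measurable]: "I n \<in> sets lborel" for n unfolding I_def by measurable
  have pointwise: "ennreal (exp (\<alpha> * f x powr q) * indicator {x. t \<le> f x} x)
      \<le> (\<Sum>n. ennreal (D n) * indicator (I n) x)" for x
  proof (cases "t \<le> f x")
    case True
    obtain m :: nat where m: "t + real m powr r \<le> f x" "f x powr q \<le> 2 powr q * (t powr q + real m + 1)"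
      using level_index_exists[OF True t q(1) r] q(2) unfolding r_def by blast
    have "\<alpha> * f x powr q \<le> \<alpha> * (2 powr q * (t powr q + real m + 1))"
      using m(2) \<alpha> by (rule mult_left_mono)
    then have "exp (\<alpha> * f x powr q) \<le> D m"
      unfolding D_def K_def by (simp add: exp_of_nat_mult[symmetric] exp_add[symmetric] algebra_simps)
    then have "ennreal (exp (\<alpha> * f x powr q) * indicator {x. t \<le> f x} x) \<le> ennreal (D m) * indicator (I m) x"
      using m True unfolding I_def by (simp add: ennreal_leI)
    also have "\<dots> \<le> (\<Sum>n. ennreal (D n) * indicator (I n) x)"
    proof -
      define F where "F n = ennreal (D n) * indicator (I n) x" for n
      have "F m \<le> suminf F" using sum_le_suminf[OF summableI, of "{m}" F] by simp
      then show ?thesis unfolding F_def .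
    qed
    finally show ?thesis .
  qed simp
  have "(\<integral>\<^sup>+x. ennreal (exp (\<alpha> * f x powr q) * indicator {x. t \<le> f x} x) \<partial>lborel)
      \<le> (\<integral>\<^sup>+x. (\<Sum>n. ennreal (D n) * indicator (I n) x) \<partial>lborel)"
    using pointwise by (rule nn_integral_mono)
  also have "\<dots> = (\<Sum>n. \<integral>\<^sup>+x. ennreal (D n) * indicator (I n) x \<partial>lborel)"
    by (rule nn_integral_suminf) measurable
  also have "\<dots> = (\<Sum>n. ennreal (D n) * emeasure lborel (I n))"
    using I_sets by (simp add: nn_integral_cmult_indicator)
  also have "\<dots> \<le> (\<Sum>n. ennreal (K * B * \<rho> ^ n))"
  proof (intro suminf_le summableI)
    fix n
    have "emeasure lborel (I n) \<le> ennreal B * ennreal ((g / c) ^ n)"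
      unfolding I_def r_def c_def B(1)[symmetric] using p fin energy g
      by (intro emeasure_level_decay) auto
    then have "ennreal (D n) * emeasure lborel (I n) \<le> ennreal (D n) * (ennreal B * ennreal ((g / c) ^ n))"
      by (rule mult_left_mono) simp
    also have "\<dots> = ennreal (K * B * \<rho> ^ n)"
      using B g capacity_const_pos[of "DIM('a)"]
      by (simp add: D_def K_def \<rho>_def c_def ennreal_mult[symmetric] power_mult_distrib power_divide mult_ac)
    finally show "ennreal (D n) * emeasure lborel (I n) \<le> ennreal (K * B * \<rho> ^ n)" .
  qed
  also have "\<dots> = ennreal (\<Sum>n. K * B * \<rho> ^ n)"
    using B \<rho> by (intro suminf_ennreal2) (auto simp: K_def intro!: summable_mult summable_geometric)
  also have "\<dots> < \<infinity>" by simp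
  finally show ?thesis
    by (simp add: integrable_iff_bounded)
qed

lemma emeasure_level_finite:
  fixes u :: "'a::euclidean_space \<Rightarrow> real"
  assumes [measurable]: "u \<in> borel_measurable lborel" and "integrable lborel (\<lambda>x. \<bar>u x\<bar> powr p)"
    and "p > 0" "t > 0"
  shows "emeasure lborel {x. t \<le> \<bar>u x\<bar>} < \<infinity>"
proof -
  have "{x. t \<le> \<bar>u x\<bar>} = {x \<in> space lborel. t powr p \<le> \<bar>u x\<bar> powr p}"
    using assms by (auto intro: powr_mono2) (meson abs_ge_zero not_le powr_less_mono2)
  also have "emeasure lborel \<dots> \<le> ennreal (1 / t powr p * integral\<^sup>L lborel (\<lambda>x. \<bar>u x\<bar> powr p))"
    using assms by (intro integral_Markov_inequality) auto
  also have "\<dots> < \<infinity>" by simp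
  finally show ?thesis .
qed

lemma integrable_exp_above_some_level:
  fixes u :: "'a::euclidean_space \<Rightarrow> real"
  assumes [measurable]: "u \<in> borel_measurable lborel" and p: "p > 1"
    and Lp: "integrable lborel (\<lambda>x. \<bar>u x\<bar> powr p)" and energy: "gagliardo_energy p u < \<infinity>"
    and q: "q > 0" "q * (1 - 1/p) = 1" and \<alpha>: "\<alpha> \<ge> 0"
  obtains t where "t \<ge> 1" "integrable lborel (\<lambda>x. exp (\<alpha> * \<bar>u x\<bar> powr q) * indicator {x. t \<le> \<bar>u x\<bar>} x)"
proof -
  define \<epsilon> where "\<epsilon> = capacity_const DIM('a) / exp (\<alpha> * 2 powr q)"
  have "\<epsilon> > 0" unfolding \<epsilon>_def using capacity_const_pos by simp
  then have "\<forall>\<^sub>F i in sequentially. gagliardo_energy p (\<lambda>x. excess (real i) \<bar>u x\<bar>) < ennreal \<epsilon>"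
    using excess_energy_tendsto_0[of u p] p energy by (intro order_tendstoD(2)) auto
  then obtain N where N: "\<And>i. i \<ge> N \<Longrightarrow> gagliardo_energy p (\<lambda>x. excess (real i) \<bar>u x\<bar>) < ennreal \<epsilon>"
    by (auto simp: eventually_sequentially)
  define t where "t = real (Suc N)"
  have t: "t \<ge> 1" unfolding t_def by simp
  obtain g where g: "gagliardo_energy p (\<lambda>x. excess t \<bar>u x\<bar>) = ennreal g" "g \<ge> 0" "g < \<epsilon>"
    using N[of "Suc N"] unfolding t_def
    by (cases "gagliardo_energy p (\<lambda>x. excess (real (Suc N)) \<bar>u x\<bar>)" rule: ennreal_cases)
      (auto simp: ennreal_less_iff)
  have "exp (\<alpha> * 2 powr q) * g < capacity_const DIM('a)"
    using g(3) unfolding \<epsilon>_def by (simp add: field_simps)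
  moreover have "emeasure lborel {x. t \<le> \<bar>u x\<bar>} < \<infinity>"
    using t p Lp by (intro emeasure_level_finite) auto
  ultimately have "integrable lborel (\<lambda>x. exp (\<alpha> * \<bar>u x\<bar> powr q) * indicator {x. t \<le> \<bar>u x\<bar>} x)"
    using p q \<alpha> t g by (intro integrable_exp_above_level[where g=g]) auto
  with t show thesis by (rule that)
qed

section \<open>The function \<open>R\<close>\<close>

lemma exp_minus_taylor_bounds:
  fixes x :: real
  assumes "x \<ge> 0"
  shows "0 \<le> exp x - (\<Sum>k\<in>{0..K}. x ^ k / fact k)"
    and "exp x - (\<Sum>k\<in>{0..K}. x ^ k / fact k) \<le> exp x / fact (Suc K) * x ^ Suc K"
proof -
  obtain \<tau> where \<tau>: "\<bar>\<tau>\<bar> \<le> \<bar>x\<bar>" "exp x = (\<Sum>k<Suc K. x ^ k / fact k) + exp \<tau> / fact (Suc K) * x ^ Suc K"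
    using Maclaurin_exp_le[of x "Suc K"] by blast
  have remainder: "exp x - (\<Sum>k\<in>{0..K}. x ^ k / fact k) = exp \<tau> / fact (Suc K) * x ^ Suc K"
    using \<tau>(2) by (simp add: atLeast0AtMost lessThan_Suc_atMost)
  show "0 \<le> exp x - (\<Sum>k\<in>{0..K}. x ^ k / fact k)"
    unfolding remainder using assms by simp
  have "exp \<tau> \<le> exp x" using \<tau>(1) assms by simp
  then show "exp x - (\<Sum>k\<in>{0..K}. x ^ k / fact k) \<le> exp x / fact (Suc K) * x ^ Suc K"
    unfolding remainder using assms by (intro mult_right_mono divide_right_mono) auto
qed

lemma Rfun_altdef:
  "Rfun N s p \<alpha> t = exp (\<alpha> * \<bar>t\<bar> powr (real N / (real N - s)))
    - (\<Sum>k\<in>{0..kp p - 2}. (\<alpha> * \<bar>t\<bar> powr (real N / (real N - s))) ^ k / fact k)"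
  by (simp add: Rfun_def power_mult_distrib)

lemma Rfun_nonneg: "\<alpha> \<ge> 0 \<Longrightarrow> Rfun N s p \<alpha> t \<ge> 0"
  unfolding Rfun_altdef by (rule exp_minus_taylor_bounds) simp

lemma Rfun_le_exp: "\<alpha> \<ge> 0 \<Longrightarrow> Rfun N s p \<alpha> t \<le> exp (\<alpha> * \<bar>t\<bar> powr (real N / (real N - s)))"
  unfolding Rfun_altdef by (auto intro!: sum_nonneg)

lemma Rfun_le_powr:
  assumes \<alpha>: "\<alpha> \<ge> 0" and q: "real N / (real N - s) \<ge> 0" "real N / (real N - s) * real (Suc (kp p - 2)) \<ge> p"
  obtains C where "C \<ge> 0" "\<And>t. \<bar>t\<bar> \<le> T \<Longrightarrow> Rfun N s p \<alpha> t \<le> C * \<bar>t\<bar> powr p"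
proof
  define q where "q = real N / (real N - s)"
  define K where "K = Suc (kp p - 2)"
  define C where "C = exp (\<alpha> * T powr q) / fact K * \<alpha> ^ K * T powr (q * real K - p)"
  show "C \<ge> 0" unfolding C_def using \<alpha> by simp
  fix t :: real
  assume t: "\<bar>t\<bar> \<le> T"
  have power: "(\<alpha> * \<bar>t\<bar> powr q) ^ K = \<alpha> ^ K * (\<bar>t\<bar> powr (q * real K - p) * \<bar>t\<bar> powr p)"
    by (cases "t = 0") (simp_all add: K_def power_mult_distrib powr_power powr_add[symmetric] algebra_simps)
  have "Rfun N s p \<alpha> t \<le> exp (\<alpha> * \<bar>t\<bar> powr q) / fact K * (\<alpha> * \<bar>t\<bar> powr q) ^ K"
    unfolding Rfun_altdef q_def K_def using \<alpha> by (intro exp_minus_taylor_bounds) simp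
  also have "\<dots> \<le> exp (\<alpha> * T powr q) / fact K * (\<alpha> ^ K * (T powr (q * real K - p) * \<bar>t\<bar> powr p))"
  proof -
    have "exp (\<alpha> * \<bar>t\<bar> powr q) \<le> exp (\<alpha> * T powr q)"
      using \<alpha> t q by (simp add: q_def mult_left_mono powr_mono2)
    moreover have "\<bar>t\<bar> powr (q * real K - p) \<le> T powr (q * real K - p)"
      using t q unfolding q_def K_def by (intro powr_mono2) auto
    ultimately show ?thesis
      unfolding power using \<alpha> by (intro mult_mono divide_right_mono mult_left_mono) auto
  qed
  finally show "Rfun N s p \<alpha> t \<le> C * \<bar>t\<bar> powr p"
    unfolding C_def by (simp add: mult_ac)
qed

lemma kp_ge: "p > 1 \<Longrightarrow> p - 1 \<le> real (Suc (kp p - 2))"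
  unfolding kp_def by linarith

lemma frac_sobolev_critical:
  fixes u :: "'a::euclidean_space \<Rightarrow> real"
  assumes "u \<in> frac_sobolev s p" "real DIM('a) = s * p"
  shows "u \<in> borel_measurable lborel" "integrable lborel (\<lambda>x. \<bar>u x\<bar> powr p)"
    and "gagliardo_energy p u < \<infinity>"
proof -
  have "integrable (lborel \<Otimes>\<^sub>M lborel)
      (\<lambda>(x, y). \<bar>u x - u y\<bar> powr p / norm (x - y) powr (2 * real DIM('a)))"
    using assms unfolding frac_sobolev_def by (auto simp: mult.commute)
  then show "gagliardo_energy p u < \<infinity>"
    by (simp add: integrable_iff_bounded gagliardo_energy_def gagliardo_kernel_def case_prod_beta')
qed (use assms in \<open>auto simp: frac_sobolev_def\<close>)

lemma critical_exponent:
  assumes "0 < s" "real N = s * p"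
  shows "real N / (real N - s) = p / (p - 1)"
proof -
  have "real N - s = s * (p - 1)" using assms by (simp add: algebra_simps)
  then show ?thesis using assms by simp
qed

theorem lemma4:
  fixes s p \<alpha> :: real and u :: "'a::euclidean_space \<Rightarrow> real"
  assumes "0 < s" "s < 1" "p > 2" "real DIM('a) = s * p"
    and "\<alpha> > 0"
    and "u \<in> frac_sobolev s p"
  shows "integrable lborel (\<lambda>x. Rfun DIM('a) s p \<alpha> (u x))"
proof -
  note u = frac_sobolev_critical[OF assms(6,4)]
  have [measurable]: "u \<in> borel_measurable lborel" by (rule u(1))
  define q where "q = real DIM('a) / (real DIM('a) - s)"
  have q_pos: "q > 0" and q_conj: "q * (1 - 1/p) = 1" and q_taylor: "q * real (Suc (kp p - 2)) \<ge> p"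
    using assms(3) kp_ge[of p] unfolding q_def critical_exponent[OF assms(1,4)]
    by (auto simp: field_simps)
  obtain t where "t \<ge> 1"
    and tail: "integrable lborel (\<lambda>x. exp (\<alpha> * \<bar>u x\<bar> powr q) * indicator {x. t \<le> \<bar>u x\<bar>} x)"
    using integrable_exp_above_some_level[of u p q \<alpha>] u assms(3,5) q_pos q_conj by auto
  obtain C where "C \<ge> 0" and C: "\<And>r. \<bar>r\<bar> \<le> t \<Longrightarrow> Rfun DIM('a) s p \<alpha> r \<le> C * \<bar>r\<bar> powr p"
    using Rfun_le_powr[of \<alpha> "DIM('a)" s p t] assms(5) q_pos q_taylor unfolding q_def by auto
  have majorant: "integrable lborel (\<lambda>x. C * \<bar>u x\<bar> powr p + exp (\<alpha> * \<bar>u x\<bar> powr q) * indicator {x. t \<le> \<bar>u x\<bar>} x)"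
    using u(2) tail by (intro Bochner_Integration.integrable_add integrable_mult_right)
  have "\<bar>Rfun DIM('a) s p \<alpha> (u x)\<bar>
      \<le> C * \<bar>u x\<bar> powr p + exp (\<alpha> * \<bar>u x\<bar> powr q) * indicator {x. t \<le> \<bar>u x\<bar>} x" for x
    using C[of "u x"] Rfun_nonneg[of \<alpha>] Rfun_le_exp[of \<alpha>] assms(5) \<open>C \<ge> 0\<close>
    unfolding q_def by (cases "t \<le> \<bar>u x\<bar>") (auto intro: add_increasing)
  then show ?thesis
    by (intro Bochner_Integration.integrable_bound[OF majorant] AE_I2)
      (auto simp: Rfun_def intro: order_trans[OF _ abs_ge_self])
qed

end
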